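(* Let $X$ be a real Hilbert space, let $m\ge2$ be an integer, $I=\{1,\dots,m\}$, let $(R_i)_{i\in I}$ be operators $X\to X$, let $r\in I$, let $(\alpha_i)_{i\in I}$ be reals with $\alpha_i\in\left]0,1\right[$ for $i\in I\setminus\{r\}$ and $\alpha_r>0$, let $\delta_i\in\mathbb{R}\setminus\{0\}$, and suppose that for each $i\in I$, $\tfrac1{\delta_i}R_i$ is $\alpha_i$-conically nonexpansive. Set $R=R_m\cdots R_1$ and $$\bar\alpha=\frac{\sum_{i\in I,\,i\neq r}\frac{\alpha_i}{1-\alpha_i}}{1+\sum_{i\in I,\,i\neq r}\frac{\alpha_i}{1-\alpha_i}}.$$ Suppose $\alpha_r\bar\alpha<1$, and set $$\alpha=\begin{cases}\dfrac{\sum_{i=1}^m\frac{\alpha_i}{1-\alpha_i}}{1+\sum_{i=1}^m\frac{\alpha_i}{1-\alpha_i}},&\alpha_r\neq1;\\ 1,&\alpha_r=1.\end{cases}$$ Then there exists a nonexpansive $N\colon X\to X$ such that $R=\delta_m\cdots\delta_1\big((1-\alpha)\mathrm{Id}+\alpha N\big)$.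
   Context: For $\alpha>0$, an operator $T\colon X\to X$ is $\alpha$-conically nonexpansive if there exists a nonexpansive ($1$-Lipschitz) $N\colon X\to X$ with $T=(1-\alpha)\mathrm{Id}+\alpha N$. *)

theory Defs
  imports "HOL-Analysis.Analysis"
begin

definition nonexpansive :: "('a::real_normed_vector \<Rightarrow> 'a) \<Rightarrow> bool" where
  "nonexpansive N \<longleftrightarrow> 1-lipschitz_on UNIV N"

definition conically_nonexpansive :: "real \<Rightarrow> ('a::real_normed_vector \<Rightarrow> 'a) \<Rightarrow> bool" where
  "conically_nonexpansive \<alpha> T \<longleftrightarrow> \<alpha> > 0 \<and>
     (\<exists>N. nonexpansive N \<and> T = (\<lambda>x. (1 - \<alpha>) *\<^sub>R x + \<alpha> *\<^sub>R N x))"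

fun comp_ops :: "(nat \<Rightarrow> 'a \<Rightarrow> 'a) \<Rightarrow> nat \<Rightarrow> 'a \<Rightarrow> 'a" where
  "comp_ops R 0 = id"
| "comp_ops R (Suc k) = R (Suc k) \<circ> comp_ops R k"

end

theory Submission
  imports Defs
begin

text \<open>
  Put \<open>\<kappa>\<^sub>i = \<alpha>\<^sub>i / (1 - \<alpha>\<^sub>i)\<close>. In a real inner product space, \<open>T\<close> is
  \<open>\<alpha>\<close>-conically nonexpansive iff
  \<open>\<parallel>Tx - Ty\<parallel>\<^sup>2 + (1/\<kappa>) \<parallel>(x - y) - (Tx - Ty)\<parallel>\<^sup>2 \<le> \<parallel>x - y\<parallel>\<^sup>2\<close>, and such inequalities
  compose: by \<open>\<parallel>v + w\<parallel>\<^sup>2/(k\<^sub>1 + k\<^sub>2) \<le> \<parallel>v\<parallel>\<^sup>2/k\<^sub>1 + \<parallel>w\<parallel>\<^sup>2/k\<^sub>2\<close>, valid whenever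
  \<open>k\<^sub>1 k\<^sub>2 (k\<^sub>1 + k\<^sub>2) > 0\<close>, the constants \<open>1/k\<^sub>1\<close> and \<open>1/k\<^sub>2\<close> of two factors combine
  to \<open>1/(k\<^sub>1 + k\<^sub>2)\<close> for their composition. All \<open>\<kappa>\<^sub>i\<close> with \<open>i \<noteq> r\<close> are positive;
  if \<open>\<alpha>\<^sub>r > 1\<close> then \<open>\<kappa>\<^sub>r < 0\<close>, and the hypothesis
  \<open>\<alpha>\<^sub>r \<kappa>'/(1 + \<kappa>') < 1\<close>, with \<open>\<kappa>' = \<Sum>\<^sub>i\<^sub>\<noteq>\<^sub>r \<kappa>\<^sub>i\<close>, says exactly that
  \<open>1 + \<Sum>\<kappa>\<^sub>i < 0\<close>, which makes every partial sum from index \<open>r\<close> on negative. Either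
  way the sign condition holds at each step, so the composition (rescaled by the
  products of the \<open>\<delta>\<^sub>i\<close>) has constant \<open>1/\<Sum>\<kappa>\<^sub>i\<close>, i.e. it is conically nonexpansive
  with \<open>\<alpha> = \<Sum>\<kappa>\<^sub>i/(1 + \<Sum>\<kappa>\<^sub>i)\<close>. If \<open>\<alpha>\<^sub>r = 1\<close>, all factors are nonexpansive.
\<close>

definition conical_ineq :: "real \<Rightarrow> ('a::real_inner \<Rightarrow> 'a) \<Rightarrow> bool" where
  "conical_ineq c T \<longleftrightarrow>
     (\<forall>x y. (norm (T x - T y))\<^sup>2 + c * (norm ((x - y) - (T x - T y)))\<^sup>2 \<le> (norm (x - y))\<^sup>2)"

lemma norm_affine_combination_sq:
  fixes u w :: "'a::real_inner"
  shows "(norm ((1 - t) *\<^sub>R u + t *\<^sub>R w))\<^sup>2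
           = (1 - t) * (norm u)\<^sup>2 + t * (norm w)\<^sup>2 - t * (1 - t) * (norm (u - w))\<^sup>2"
  unfolding power2_norm_eq_inner
  by (simp add: inner_add_left inner_add_right inner_diff_left inner_diff_right inner_commute
      algebra_simps)

lemma nonexpansive_iff_norm:
  "nonexpansive N \<longleftrightarrow> (\<forall>x y. norm (N x - N y) \<le> norm (x - y))"
  by (simp add: nonexpansive_def lipschitz_on_def dist_norm)

lemma conically_nonexpansive_iff_conical_ineq:
  fixes T :: "'a::real_inner \<Rightarrow> 'a"
  assumes "t > 0"
  shows "conically_nonexpansive t T \<longleftrightarrow> conical_ineq ((1 - t) / t) T"
proof -
  define N where "N x = (1 / t) *\<^sub>R (T x - (1 - t) *\<^sub>R x)" for x
  have decomp: "T = (\<lambda>x. (1 - t) *\<^sub>R x + t *\<^sub>R M x) \<longleftrightarrow> M = N" for M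
  proof -
    have "T x = (1 - t) *\<^sub>R x + t *\<^sub>R M x \<longleftrightarrow> M x = N x" for x
      using assms unfolding N_def by auto
    then show ?thesis by (auto simp: fun_eq_iff)
  qed
  have pointwise: "(norm (T x - T y))\<^sup>2 + (1 - t) / t * (norm ((x - y) - (T x - T y)))\<^sup>2
      = (1 - t) * (norm (x - y))\<^sup>2 + t * (norm (N x - N y))\<^sup>2" for x y
  proof -
    have "T x - T y = (1 - t) *\<^sub>R (x - y) + t *\<^sub>R (N x - N y)"
      using assms by (simp add: N_def algebra_simps)
    then have step: "(norm (T x - T y))\<^sup>2 = (1 - t) * (norm (x - y))\<^sup>2
        + t * (norm (N x - N y))\<^sup>2 - t * (1 - t) * (norm ((x - y) - (N x - N y)))\<^sup>2"
      by (simp only: norm_affine_combination_sq)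
    have "(x - y) - (T x - T y) = t *\<^sub>R ((x - y) - (N x - N y))"
      using assms by (simp add: N_def algebra_simps)
    then have residual: "(norm ((x - y) - (T x - T y)))\<^sup>2 = t\<^sup>2 * (norm ((x - y) - (N x - N y)))\<^sup>2"
      by (simp add: power_mult_distrib)
    show ?thesis
      unfolding step residual using assms by (simp add: power2_eq_square field_simps)
  qed
  have "conically_nonexpansive t T \<longleftrightarrow> nonexpansive N"
    using assms decomp by (auto simp: conically_nonexpansive_def)
  also have "\<dots> \<longleftrightarrow> (\<forall>x y. t * (norm (N x - N y))\<^sup>2 \<le> t * (norm (x - y))\<^sup>2)"
    using assms by (simp add: nonexpansive_iff_norm abs_le_square_iff[symmetric])
  also have "\<dots> \<longleftrightarrow> conical_ineq ((1 - t) / t) T"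
    unfolding conical_ineq_def pointwise by (simp add: algebra_simps)
  finally show ?thesis .
qed

lemma conically_nonexpansive_conj_scaleR:
  fixes G :: "'a::real_normed_vector \<Rightarrow> 'a"
  assumes p: "p \<noteq> 0" and G: "conically_nonexpansive t G"
  shows "conically_nonexpansive t (\<lambda>y. (1 / p) *\<^sub>R G (p *\<^sub>R y))"
proof -
  obtain N where t: "t > 0" and N: "nonexpansive N"
    and G_eq: "G = (\<lambda>x. (1 - t) *\<^sub>R x + t *\<^sub>R N x)"
    using G unfolding conically_nonexpansive_def by blast
  have "norm ((1 / p) *\<^sub>R N (p *\<^sub>R x) - (1 / p) *\<^sub>R N (p *\<^sub>R y)) \<le> norm (x - y)" for x y
  proof -
    have "norm (N (p *\<^sub>R x) - N (p *\<^sub>R y)) \<le> \<bar>p\<bar> * norm (x - y)"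
      using N by (metis nonexpansive_iff_norm norm_scaleR scaleR_diff_right)
    moreover have "norm ((1 / p) *\<^sub>R N (p *\<^sub>R x) - (1 / p) *\<^sub>R N (p *\<^sub>R y))
        = norm (N (p *\<^sub>R x) - N (p *\<^sub>R y)) / \<bar>p\<bar>"
      by (metis norm_scaleR scaleR_diff_right abs_divide abs_one divide_inverse_commute
          inverse_eq_divide)
    ultimately show ?thesis
      using p by (simp add: divide_le_eq mult.commute)
  qed
  then have "nonexpansive (\<lambda>y. (1 / p) *\<^sub>R N (p *\<^sub>R y))"
    by (simp add: nonexpansive_iff_norm)
  moreover have "(\<lambda>y. (1 / p) *\<^sub>R G (p *\<^sub>R y))
      = (\<lambda>y. (1 - t) *\<^sub>R y + t *\<^sub>R ((1 / p) *\<^sub>R N (p *\<^sub>R y)))"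
    using p by (simp add: G_eq fun_eq_iff algebra_simps)
  ultimately show ?thesis
    using t unfolding conically_nonexpansive_def by blast
qed

lemma conically_nonexpansive_imp_nonexpansive:
  assumes "t \<le> 1" and "conically_nonexpansive t T"
  shows "nonexpansive T"
proof -
  obtain N where "t > 0" and N: "1-lipschitz_on UNIV N"
    and T_eq: "T = (\<lambda>x. (1 - t) *\<^sub>R x + t *\<^sub>R N x)"
    using assms(2) unfolding conically_nonexpansive_def nonexpansive_def by blast
  then have "((1 - t) * 1 + t * 1)-lipschitz_on UNIV T"
    using assms(1) unfolding T_eq by (intro lipschitz_intros) auto
  then show ?thesis
    by (simp add: nonexpansive_def)
qed

lemma nonexpansive_comp_ops:
  assumes "\<forall>i\<in>{1..k}. nonexpansive (T i)"
  shows "nonexpansive (comp_ops T k)"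
  using assms
proof (induction k)
  case 0
  then show ?case
    using lipschitz_on_id by (simp add: nonexpansive_def id_def)
next
  case (Suc k)
  have "1-lipschitz_on UNIV (comp_ops T k)" and "1-lipschitz_on UNIV (T (Suc k))"
    using Suc by (auto simp: nonexpansive_def)
  then have "(1 * 1)-lipschitz_on UNIV (T (Suc k) \<circ> comp_ops T k)"
    by (blast intro: lipschitz_on_compose lipschitz_on_subset)
  then show ?case
    by (simp add: nonexpansive_def)
qed

lemma norm_add_sq_weighted_le:
  fixes v w :: "'a::real_inner"
  assumes "k1 * k2 * (k1 + k2) > 0"
  shows "(norm (v + w))\<^sup>2 / (k1 + k2) \<le> (norm v)\<^sup>2 / k1 + (norm w)\<^sup>2 / k2"
proof -
  have "k1 \<noteq> 0" "k2 \<noteq> 0" "k1 + k2 \<noteq> 0"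
    using assms by auto
  then have "(norm v)\<^sup>2 / k1 + (norm w)\<^sup>2 / k2 - (norm (v + w))\<^sup>2 / (k1 + k2)
      = (norm (k2 *\<^sub>R v - k1 *\<^sub>R w))\<^sup>2 / (k1 * k2 * (k1 + k2))"
    unfolding power2_norm_eq_inner
    by (simp add: inner_diff_left inner_diff_right inner_add_left inner_add_right inner_commute
        field_simps power2_eq_square)
  moreover have "(norm (k2 *\<^sub>R v - k1 *\<^sub>R w))\<^sup>2 / (k1 * k2 * (k1 + k2)) \<ge> 0"
    using assms by simp
  ultimately show ?thesis
    by linarith
qed

lemma conical_ineq_comp:
  fixes T1 T2 :: "'a::real_inner \<Rightarrow> 'a"
  assumes T1: "conical_ineq (1 / k1) T1" and T2: "conical_ineq (1 / k2) T2"
    and k: "k1 * k2 * (k1 + k2) > 0"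
  shows "conical_ineq (1 / (k1 + k2)) (T2 \<circ> T1)"
  unfolding conical_ineq_def
proof (intro allI)
  fix x y :: 'a
  define d1 where "d1 = (x - y) - (T1 x - T1 y)"
  define d2 where "d2 = (T1 x - T1 y) - (T2 (T1 x) - T2 (T1 y))"
  have "(norm (T1 x - T1 y))\<^sup>2 + (norm d1)\<^sup>2 / k1 \<le> (norm (x - y))\<^sup>2"
    using T1 by (simp add: conical_ineq_def d1_def)
  moreover have "(norm (T2 (T1 x) - T2 (T1 y)))\<^sup>2 + (norm d2)\<^sup>2 / k2 \<le> (norm (T1 x - T1 y))\<^sup>2"
    using T2 by (simp add: conical_ineq_def d2_def)
  moreover have "(norm (d1 + d2))\<^sup>2 / (k1 + k2) \<le> (norm d1)\<^sup>2 / k1 + (norm d2)\<^sup>2 / k2"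
    using k by (rule norm_add_sq_weighted_le)
  moreover have "(x - y) - ((T2 \<circ> T1) x - (T2 \<circ> T1) y) = d1 + d2"
    by (simp add: d1_def d2_def)
  ultimately show "(norm ((T2 \<circ> T1) x - (T2 \<circ> T1) y))\<^sup>2
      + 1 / (k1 + k2) * (norm ((x - y) - ((T2 \<circ> T1) x - (T2 \<circ> T1) y)))\<^sup>2 \<le> (norm (x - y))\<^sup>2"
    by simp
qed

lemma conical_ineq_comp_ops:
  fixes T :: "nat \<Rightarrow> 'a::real_inner \<Rightarrow> 'a"
  assumes T: "\<forall>i\<in>{1..m}. conical_ineq (1 / \<kappa> i) (T i)"
    and signs: "\<forall>k\<in>{2..m}. (\<Sum>i=1..k-1. \<kappa> i) * \<kappa> k * (\<Sum>i=1..k. \<kappa> i) > 0"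
    and k: "1 \<le> k" "k \<le> m"
  shows "conical_ineq (1 / (\<Sum>i=1..k. \<kappa> i)) (comp_ops T k)"
  using k
proof (induction k)
  case 0
  then show ?case by simp
next
  case (Suc k)
  show ?case
  proof (cases "k = 0")
    case True
    then show ?thesis
      using T Suc.prems by (simp add: o_def)
  next
    case False
    have "conical_ineq (1 / ((\<Sum>i=1..k. \<kappa> i) + \<kappa> (Suc k))) (T (Suc k) \<circ> comp_ops T k)"
    proof (rule conical_ineq_comp)
      show "conical_ineq (1 / (\<Sum>i=1..k. \<kappa> i)) (comp_ops T k)"
        using Suc False by simp
      show "conical_ineq (1 / \<kappa> (Suc k)) (T (Suc k))"
        using T Suc.prems by simp
      show "(\<Sum>i=1..k. \<kappa> i) * \<kappa> (Suc k) * ((\<Sum>i=1..k. \<kappa> i) + \<kappa> (Suc k)) > 0"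
        using signs[rule_format, of "Suc k"] Suc.prems False by simp
    qed
    then show ?thesis
      by (simp del: comp_apply)
  qed
qed

lemma partial_sums_sign_pattern:
  fixes \<kappa> :: "nat \<Rightarrow> real"
  assumes r: "r \<in> {1..m}" and pos: "\<forall>i\<in>{1..m} - {r}. \<kappa> i > 0"
    and r_sign: "\<kappa> r > 0 \<or> (\<Sum>i=1..m. \<kappa> i) < 0"
    and k: "2 \<le> k" "k \<le> m"
  shows "(\<Sum>i=1..k-1. \<kappa> i) * \<kappa> k * (\<Sum>i=1..k. \<kappa> i) > 0"
proof -
  define K where "K j = (\<Sum>i=1..j. \<kappa> i)" for j
  have K_Suc: "K k = K (k - 1) + \<kappa> k"
    using k by (cases k) (auto simp: K_def)
  have K_pos: "K j > 0" if "1 \<le> j" "j \<le> m" "j < r \<or> \<kappa> r > 0" for j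
  proof -
    have "\<kappa> i > 0" if "i \<in> {1..j}" for i
      using pos that \<open>j \<le> m\<close> \<open>j < r \<or> \<kappa> r > 0\<close> by (cases "i = r") auto
    then show ?thesis
      unfolding K_def using \<open>1 \<le> j\<close> by (intro sum_pos) auto
  qed
  have k_bounds: "1 \<le> k - 1" "k - 1 \<le> m" "1 \<le> k"
    using k by auto
  show ?thesis
  proof (cases "\<kappa> r > 0")
    case True
    then have "K (k - 1) > 0" "\<kappa> k > 0" "K k > 0"
      using K_pos[OF k_bounds(1,2)] K_pos[OF k_bounds(3) k(2)] pos k by (auto simp: K_def)
    then show ?thesis
      unfolding K_def by simp
  next
    case False
    then have "K m < 0"
      using r_sign by (simp add: K_def)
    have K_neg: "K j < 0" if "r \<le> j" "j \<le> m" for j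
    proof -
      have "K j \<le> K m"
        unfolding K_def using that pos r by (intro sum_mono2) (auto intro: less_imp_le)
      then show ?thesis
        using \<open>K m < 0\<close> by linarith
    qed
    consider "k < r" | "k = r" | "r < k"
      by linarith
    then show ?thesis
    proof cases
      case 1
      have "K (k - 1) > 0"
        by (rule K_pos[OF k_bounds(1,2)]) (use 1 in arith)
      moreover have "K k > 0"
        by (rule K_pos[OF k_bounds(3) k(2)]) (use 1 in arith)
      moreover have "\<kappa> k > 0"
        using pos k 1 by auto
      ultimately show ?thesis
        unfolding K_def by simp
    next
      case 2
      have "K (k - 1) > 0"
        by (rule K_pos[OF k_bounds(1,2)]) (use 2 k in arith)
      moreover have "K k < 0"
        using K_neg[OF _ k(2)] 2 by simp
      ultimately show ?thesis
        using K_Suc unfolding K_def by (simp add: mult_pos_neg mult_neg_neg)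
    next
      case 3
      then have "K (k - 1) < 0" "\<kappa> k > 0" "K k < 0"
        using K_neg[OF _ k_bounds(2)] K_neg[OF _ k(2)] pos k r by auto
      then show ?thesis
        unfolding K_def by (simp add: mult_neg_pos mult_neg_neg)
    qed
  qed
qed

lemma comp_ops_scaleR_factor:
  fixes R :: "nat \<Rightarrow> 'a::real_vector \<Rightarrow> 'a"
  assumes "\<forall>i\<in>{1..k}. \<delta> i \<noteq> 0"
  shows "comp_ops R k x = (\<Prod>i=1..k. \<delta> i) *\<^sub>R comp_ops
    (\<lambda>i y. (1 / (\<Prod>j=1..i-1. \<delta> j)) *\<^sub>R ((1 / \<delta> i) *\<^sub>R R i ((\<Prod>j=1..i-1. \<delta> j) *\<^sub>R y))) k x"
  using assms
proof (induction k)
  case 0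
  then show ?case by simp
next
  case (Suc k)
  have "\<delta> (Suc k) \<noteq> 0" "(\<Prod>j=1..k. \<delta> j) \<noteq> 0"
    using Suc.prems by auto
  with Suc show ?case
    by simp
qed

lemma conical_parameter_sign:
  fixes a :: "nat \<Rightarrow> real"
  assumes r: "r \<in> {1..m}" and a01: "\<forall>i\<in>{1..m} - {r}. 0 < a i \<and> a i < 1"
    and ar: "a r > 0" "a r \<noteq> 1"
    and abar: "a r * ((\<Sum>i\<in>{1..m} - {r}. a i / (1 - a i)) /
                     (1 + (\<Sum>i\<in>{1..m} - {r}. a i / (1 - a i)))) < 1"
  shows "a r / (1 - a r) > 0 \<or> 1 + (\<Sum>i=1..m. a i / (1 - a i)) < 0"
proof (cases "a r < 1")
  case True
  then show ?thesis
    using ar by simp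
next
  case False
  then have ar1: "a r > 1"
    using ar by simp
  define s where "s = (\<Sum>i\<in>{1..m} - {r}. a i / (1 - a i))"
  have "s \<ge> 0"
    unfolding s_def using a01 by (intro sum_nonneg) (auto intro: less_imp_le)
  moreover have "a r * (s / (1 + s)) < 1"
    using abar unfolding s_def .
  ultimately have "a r * s < 1 + s"
    by (simp add: field_simps)
  moreover have "(\<Sum>i=1..m. a i / (1 - a i)) = a r / (1 - a r) + s"
    unfolding s_def using r by (simp add: sum.remove)
  ultimately have "(1 + (\<Sum>i=1..m. a i / (1 - a i))) * (1 - a r) > 0"
    using ar1 by (simp add: field_simps)
  then show ?thesis
    using ar1 by (simp add: zero_less_mult_iff)
qed

lemma conically_nonexpansive_comp_ops:
  fixes T :: "nat \<Rightarrow> 'a::real_inner \<Rightarrow> 'a"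
  assumes r: "r \<in> {1..m}" and a01: "\<forall>i\<in>{1..m} - {r}. 0 < a i \<and> a i < 1"
    and ar: "a r > 0"
    and cone: "\<forall>i\<in>{1..m}. conically_nonexpansive (a i) (T i)"
    and abar: "a r * ((\<Sum>i\<in>{1..m} - {r}. a i / (1 - a i)) /
                     (1 + (\<Sum>i\<in>{1..m} - {r}. a i / (1 - a i)))) < 1"
  shows "conically_nonexpansive
    (if a r \<noteq> 1 then (\<Sum>i=1..m. a i / (1 - a i)) / (1 + (\<Sum>i=1..m. a i / (1 - a i))) else 1)
    (comp_ops T m)"
proof (cases "a r = 1")
  case True
  \<comment> \<open>Here \<open>\<kappa>\<^sub>r = a r / 0 = 0\<close> is a junk value, so this case avoids \<open>\<kappa>\<close> altogether.\<close>
  have "nonexpansive (T i)" if "i \<in> {1..m}" for i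
  proof (rule conically_nonexpansive_imp_nonexpansive)
    show "a i \<le> 1"
      using that a01 True by (cases "i = r") force+
  qed (use cone that in blast)
  then have "nonexpansive (comp_ops T m)"
    by (intro nonexpansive_comp_ops) blast
  then show ?thesis
    using True by (auto simp: conically_nonexpansive_def)
next
  case False
  define \<kappa> where "\<kappa> i = a i / (1 - a i)" for i
  define S where "S = (\<Sum>i=1..m. \<kappa> i)"
  have pos: "\<forall>i\<in>{1..m} - {r}. \<kappa> i > 0"
    using a01 by (simp add: \<kappa>_def)
  have r_sign: "\<kappa> r > 0 \<or> 1 + S < 0"
    using conical_parameter_sign[OF r a01 ar False abar] unfolding \<kappa>_def S_def .
  have ineqs: "conical_ineq (1 / \<kappa> i) (T i)" if "i \<in> {1..m}" for i
  proof -
    have "a i > 0"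
      using cone that by (simp add: conically_nonexpansive_def)
    then show ?thesis
      using cone that conically_nonexpansive_iff_conical_ineq[of "a i" "T i"] by (simp add: \<kappa>_def)
  qed
  have "conical_ineq (1 / S) (comp_ops T m)"
    unfolding S_def
  proof (rule conical_ineq_comp_ops)
    show "\<forall>k\<in>{2..m}. (\<Sum>i=1..k-1. \<kappa> i) * \<kappa> k * (\<Sum>i=1..k. \<kappa> i) > 0"
      using partial_sums_sign_pattern[OF r pos] r_sign by (auto simp: S_def)
  qed (use ineqs r in auto)
  moreover have S_sign: "S > 0 \<or> 1 + S < 0"
  proof (cases "\<kappa> r > 0")
    case True
    then have "\<forall>i\<in>{1..m}. \<kappa> i > 0"
      using pos by blast
    then show ?thesis
      unfolding S_def using r by (intro disjI1 sum_pos) auto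
  qed (use r_sign in blast)
  ultimately have "conically_nonexpansive (S / (1 + S)) (comp_ops T m)"
    by (subst conically_nonexpansive_iff_conical_ineq) (auto simp: field_simps zero_less_divide_iff)
  then show ?thesis
    using False by (simp add: S_def \<kappa>_def)
qed

theorem mainTheorem10:
  fixes R :: "nat \<Rightarrow> 'a::{real_inner, complete_space} \<Rightarrow> 'a"
    and m r :: nat and a \<delta> :: "nat \<Rightarrow> real"
  assumes m2: "m \<ge> 2"
    and r: "r \<in> {1..m}"
    and a01: "\<forall>i\<in>{1..m} - {r}. 0 < a i \<and> a i < 1"
    and ar: "a r > 0"
    and \<delta>nz: "\<forall>i\<in>{1..m}. \<delta> i \<noteq> 0"
    and cone: "\<forall>i\<in>{1..m}. conically_nonexpansive (a i) (\<lambda>x. (1 / \<delta> i) *\<^sub>R R i x)"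
    and abar: "a r * ((\<Sum>i\<in>{1..m} - {r}. a i / (1 - a i)) /
                     (1 + (\<Sum>i\<in>{1..m} - {r}. a i / (1 - a i)))) < 1"
  shows "\<exists>N. nonexpansive N \<and>
    (let \<alpha> = (if a r \<noteq> 1
                then (\<Sum>i=1..m. a i / (1 - a i)) / (1 + (\<Sum>i=1..m. a i / (1 - a i)))
                else 1)
     in comp_ops R m = (\<lambda>x. (\<Prod>i=1..m. \<delta> i) *\<^sub>R ((1 - \<alpha>) *\<^sub>R x + \<alpha> *\<^sub>R N x)))"
proof -
  define \<alpha> where "\<alpha> = (if a r \<noteq> 1
    then (\<Sum>i=1..m. a i / (1 - a i)) / (1 + (\<Sum>i=1..m. a i / (1 - a i))) else 1)"
  define P where "P i = (\<Prod>j=1..i-1. \<delta> j)" for i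
  define T where "T i y = (1 / P i) *\<^sub>R ((1 / \<delta> i) *\<^sub>R R i (P i *\<^sub>R y))" for i y
  have "conically_nonexpansive (a i) (T i)" if "i \<in> {1..m}" for i
  proof -
    have "P i \<noteq> 0"
      using \<delta>nz that by (force simp: P_def)
    then show ?thesis
      unfolding T_def using cone that by (intro conically_nonexpansive_conj_scaleR) auto
  qed
  then have "conically_nonexpansive \<alpha> (comp_ops T m)"
    unfolding \<alpha>_def by (intro conically_nonexpansive_comp_ops[OF r a01 ar _ abar]) blast
  then obtain N where N: "nonexpansive N"
    and T_eq: "comp_ops T m = (\<lambda>x. (1 - \<alpha>) *\<^sub>R x + \<alpha> *\<^sub>R N x)"
    unfolding conically_nonexpansive_def by blast
  have "comp_ops R m x = (\<Prod>i=1..m. \<delta> i) *\<^sub>R comp_ops T m x" for x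
    using comp_ops_scaleR_factor[of m \<delta> R x] \<delta>nz unfolding T_def P_def by simp
  then show ?thesis
    unfolding Let_def \<alpha>_def[symmetric] using N T_eq by (intro exI[of _ N]) (simp add: fun_eq_iff)
qed

end
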